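(* Let $\mathbb{K}$ be a perfect field, $\mathbf{u}_1,\dots,\mathbf{u}_t\in\mathbb{K}^{\mathbb{N}^n}$ with $\mathrm{ann}(\mathbf{u}_1,\dots,\mathbf{u}_t)$ zero-dimensional, and fix $j\in\{1,\dots,n\}$. Suppose $b_1<\cdots<b_u<b_{u+1}$ are the first $u+1$ standard monomials of $\mathbb{K}[X_j,\dots,X_n]/J_j$ for the lexicographic order induced by $X_j>\cdots>X_n$, with $b_1=1$. Then for any monomial $b$ with $b_u<b<b_{u+1}$, the family $\{b_1,\dots,b_u,b\}$ is dependent.
   Context: For $m\in\mathbb{N}^n$, $\mathbf{X}^m=X_1^{m_1}\cdots X_n^{m_n}$; for a sequence $\mathbf{u}=(u_m)_m$ and $f=\sum_m f_m\mathbf{X}^m$, $\langle\mathbf{u}\mid f\rangle=\sum_mf_mu_m$, $f\cdot\mathbf{u}=(\langle\mathbf{u}\mid\mathbf{X}^mf\rangle)_m$, $\mathrm{ann}(\mathbf{u})$ is the ideal of $f$ with $f\cdot\mathbf{u}=0$, and $\mathrm{ann}$ of several sequences is the intersection. $\pi_j(\mathbf{u}_i)$ is the sequence indexed by $\mathbb{N}^{n-j+1}$ with $\langle\pi_j(\mathbf{u}_i)\mid(m_j,\dots,m_n)\rangle=\langle\mathbf{u}_i\mid(0,\dots,0,m_j,\dots,m_n)\rangle$, and $J_j=\mathrm{ann}(\pi_j(\mathbf{u}_1),\dots,\pi_j(\mathbf{u}_t))\subset\mathbb{K}[X_j,\dots,X_n]$. A family of monomials in $\mathbb{K}[X_j,\dots,X_n]$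 is dependent if its images modulo $J_j$ are $\mathbb{K}$-linearly dependent. *)

theory Defs
  imports Main "HOL-Library.Poly_Mapping"
begin

text \<open>Monomials are exponent vectors \<open>nat \<Rightarrow>\<^sub>0 nat\<close> (variable X_(i+1) has index i);
  polynomials over 'a are finitely supported maps \<open>(nat \<Rightarrow>\<^sub>0 nat) \<Rightarrow>\<^sub>0 'a\<close>.
  A sequence indexed by N^n is a map from monomials to 'a (only monomials with
  support in the relevant variable set matter).\<close>

definition perfect_field :: "'a::field itself \<Rightarrow> bool" where
  "perfect_field _ \<longleftrightarrow> CHAR('a) = 0 \<or> (\<forall>y::'a. \<exists>x. x ^ CHAR('a) = y)"

definition mons_on :: "nat set \<Rightarrow> (nat \<Rightarrow>\<^sub>0 nat) set" where
  "mons_on V = {m. Poly_Mapping.keys m \<subseteq> V}"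

definition polys_on :: "nat set \<Rightarrow> ((nat \<Rightarrow>\<^sub>0 nat) \<Rightarrow>\<^sub>0 'a::zero) set" where
  "polys_on V = {f. Poly_Mapping.keys f \<subseteq> mons_on V}"

text \<open>\<open>\<langle>u | X^m f\<rangle> = \<Sum>_k f_k u_(m+k)\<close>, i.e. the m-th term of \<open>f \<cdot> u\<close>.\<close>
definition act :: "((nat \<Rightarrow>\<^sub>0 nat) \<Rightarrow>\<^sub>0 'a::comm_ring_1) \<Rightarrow> ((nat \<Rightarrow>\<^sub>0 nat) \<Rightarrow> 'a)
    \<Rightarrow> (nat \<Rightarrow>\<^sub>0 nat) \<Rightarrow> 'a" where
  "act f u m = (\<Sum>k\<in>Poly_Mapping.keys f. Poly_Mapping.lookup f k * u (m + k))"

text \<open>Annihilator, inside K[X_i : i \<in> V], of the sequences U i (i \<in> T), each viewed as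
  a sequence indexed by the monomials in the variables V (for V = {j..<n}
  this is exactly the annihilator of the projections \<open>\<pi>_j(u_i)\<close>).\<close>
definition ann_on :: "nat set \<Rightarrow> 'i set \<Rightarrow> ('i \<Rightarrow> (nat \<Rightarrow>\<^sub>0 nat) \<Rightarrow> 'a::comm_ring_1)
    \<Rightarrow> ((nat \<Rightarrow>\<^sub>0 nat) \<Rightarrow>\<^sub>0 'a) set" where
  "ann_on V T U = {f \<in> polys_on V. \<forall>i\<in>T. \<forall>m\<in>mons_on V. act f (U i) m = 0}"

text \<open>Zero-dimensional ideal I of K[X_i : i \<in> V]: the quotient is a finite-dimensional
  K-vector space, i.e. spanned by the classes of finitely many monomials.\<close>
definition zero_dim_on :: "nat set \<Rightarrow> ((nat \<Rightarrow>\<^sub>0 nat) \<Rightarrow>\<^sub>0 'a::field) set \<Rightarrow> bool" where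
  "zero_dim_on V I \<longleftrightarrow> (\<exists>B. finite B \<and> B \<subseteq> mons_on V \<and>
     (\<forall>m\<in>mons_on V. \<exists>c. Poly_Mapping.single m 1 - (\<Sum>b\<in>B. Poly_Mapping.single b (c b)) \<in> I))"

text \<open>Lexicographic order with X_1 > X_2 > ... (smaller index = larger variable).\<close>
definition lex_less :: "(nat \<Rightarrow>\<^sub>0 nat) \<Rightarrow> (nat \<Rightarrow>\<^sub>0 nat) \<Rightarrow> bool" where
  "lex_less m m' \<longleftrightarrow> (\<exists>k. Poly_Mapping.lookup m k < Poly_Mapping.lookup m' k \<and> (\<forall>i<k. Poly_Mapping.lookup m i = Poly_Mapping.lookup m' i))"

definition lex_lm :: "((nat \<Rightarrow>\<^sub>0 nat) \<Rightarrow>\<^sub>0 'a::zero) \<Rightarrow> (nat \<Rightarrow>\<^sub>0 nat) \<Rightarrow> bool" where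
  "lex_lm f m \<longleftrightarrow> m \<in> Poly_Mapping.keys f \<and> (\<forall>k\<in>Poly_Mapping.keys f. k \<noteq> m \<longrightarrow> lex_less k m)"

definition lex_standard :: "nat set \<Rightarrow> ((nat \<Rightarrow>\<^sub>0 nat) \<Rightarrow>\<^sub>0 'a::zero) set \<Rightarrow> (nat \<Rightarrow>\<^sub>0 nat) \<Rightarrow> bool" where
  "lex_standard V I m \<longleftrightarrow> m \<in> mons_on V \<and> \<not> (\<exists>f\<in>I. lex_lm f m)"

definition dependent_mod :: "((nat \<Rightarrow>\<^sub>0 nat) \<Rightarrow>\<^sub>0 'a::field) set \<Rightarrow> (nat \<Rightarrow>\<^sub>0 nat) set \<Rightarrow> bool" where
  "dependent_mod I S \<longleftrightarrow> (\<exists>c. (\<exists>s\<in>S. c s \<noteq> 0) \<and> (\<Sum>s\<in>S. Poly_Mapping.single s (c s)) \<in> I)"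

end

theory Submission
  imports Defs
begin

text \<open>The annihilator of the projected sequences is a \<open>\<bbbK>\<close>-subspace of the polynomials in
  \<open>X\<^sub>j, \<dots>, X\<^sub>n\<close>. On monomials in finitely many variables the lexicographic order is
  well-founded, so by induction every monomial \<open>m\<close> below \<open>b\<^bsub>u+1\<^esub>\<close> is congruent modulo
  the annihilator to a combination of standard monomials below \<open>b\<^bsub>u+1\<^esub>\<close>: either \<open>m\<close>
  is itself standard, or it is the leading monomial of some annihilating \<open>f\<close>, and
  solving \<open>f\<close> for \<open>m\<close> expresses it through lex-smaller monomials. The standard monomials
  below \<open>b\<^bsub>u+1\<^esub>\<close> are among \<open>b\<^sub>1, \<dots>, b\<^sub>u\<close>, and \<open>b\<close> is not among them since it
  lies strictly above \<open>b\<^sub>u\<close>, so \<open>b\<close> together with them is dependent.\<close>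

lemma lookup_single_0_mult:
  "Poly_Mapping.lookup (Poly_Mapping.single 0 a * p) k = a * Poly_Mapping.lookup p k"
  unfolding mult_map_scale_conv_mult[symmetric] by transfer (simp add: when_def)

lemma keys_single_0_mult_subset:
  "Poly_Mapping.keys (Poly_Mapping.single 0 a * p) \<subseteq> Poly_Mapping.keys p"
  by (auto simp: in_keys_iff lookup_single_0_mult)

lemma poly_mapping_sum_single_keys:
  "p = (\<Sum>k\<in>Poly_Mapping.keys p. Poly_Mapping.single k (Poly_Mapping.lookup p k))"
  by (rule poly_mapping_eqI) (simp add: lookup_sum lookup_single when_def in_keys_iff)

lemma act_superset:
  assumes "finite K" "Poly_Mapping.keys f \<subseteq> K"
  shows "act f u m = (\<Sum>k\<in>K. Poly_Mapping.lookup f k * u (m + k))"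
  unfolding act_def
  by (rule sum.mono_neutral_left) (use assms in \<open>auto simp: in_keys_iff\<close>)

lemma act_add: "act (f + g) u m = act f u m + act g u m"
  by (simp add: act_superset[OF _ keys_add] act_superset[of "Poly_Mapping.keys f \<union> Poly_Mapping.keys g" f]
      act_superset[of "Poly_Mapping.keys f \<union> Poly_Mapping.keys g" g] lookup_add distrib_right sum.distrib)

lemma act_single_0_mult: "act (Poly_Mapping.single 0 a * f) u m = a * act f u m"
proof -
  have "act (Poly_Mapping.single 0 a * f) u m
      = (\<Sum>k\<in>Poly_Mapping.keys f. a * Poly_Mapping.lookup f k * u (m + k))"
    by (simp add: act_superset[OF _ keys_single_0_mult_subset] lookup_single_0_mult)
  then show ?thesis
    by (simp add: act_def sum_distrib_left mult.assoc)
qed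

text \<open>Scalars act through the constant polynomials \<open>Poly_Mapping.single 0 a\<close>.\<close>

definition poly_subspace :: "((nat \<Rightarrow>\<^sub>0 nat) \<Rightarrow>\<^sub>0 'a::comm_ring_1) set \<Rightarrow> bool" where
  "poly_subspace I \<longleftrightarrow> 0 \<in> I \<and> (\<forall>f\<in>I. \<forall>g\<in>I. f + g \<in> I) \<and>
     (\<forall>a. \<forall>f\<in>I. Poly_Mapping.single 0 a * f \<in> I)"

lemma poly_subspaceD:
  assumes "poly_subspace I"
  shows "0 \<in> I" "f \<in> I \<Longrightarrow> g \<in> I \<Longrightarrow> f + g \<in> I"
    "f \<in> I \<Longrightarrow> Poly_Mapping.single 0 a * f \<in> I"
  using assms unfolding poly_subspace_def by blast+

lemma poly_subspace_ann_on: "poly_subspace (ann_on V T U)"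
proof -
  have "f + g \<in> ann_on V T U" if "f \<in> ann_on V T U" "g \<in> ann_on V T U" for f g
    using that keys_add[of f g] by (auto simp: ann_on_def polys_on_def act_add)
  moreover have "Poly_Mapping.single 0 a * f \<in> ann_on V T U" if "f \<in> ann_on V T U" for a f
    using that keys_single_0_mult_subset[of a f]
    by (auto simp: ann_on_def polys_on_def act_single_0_mult)
  moreover have "0 \<in> ann_on V T U"
    by (simp add: ann_on_def polys_on_def act_def)
  ultimately show ?thesis
    unfolding poly_subspace_def by blast
qed

definition in_span_mod ::
    "((nat \<Rightarrow>\<^sub>0 nat) \<Rightarrow>\<^sub>0 'a::comm_ring_1) set \<Rightarrow> (nat \<Rightarrow>\<^sub>0 nat) set
      \<Rightarrow> ((nat \<Rightarrow>\<^sub>0 nat) \<Rightarrow>\<^sub>0 'a) \<Rightarrow> bool" where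
  "in_span_mod I S p \<longleftrightarrow> (\<exists>c. p - (\<Sum>s\<in>S. Poly_Mapping.single s (c s)) \<in> I)"

context
  fixes I :: "((nat \<Rightarrow>\<^sub>0 nat) \<Rightarrow>\<^sub>0 'a::comm_ring_1) set"
  assumes I: "poly_subspace I"
begin

lemma in_span_mod_mem: "p \<in> I \<Longrightarrow> in_span_mod I S p"
  unfolding in_span_mod_def by (rule exI[of _ "\<lambda>_. 0"]) simp

lemma in_span_mod_single:
  assumes "finite S" "s \<in> S"
  shows "in_span_mod I S (Poly_Mapping.single s a)"
proof -
  have "(\<Sum>t\<in>S. Poly_Mapping.single t (if t = s then a else 0)) = Poly_Mapping.single s a"
    using assms by (simp add: if_distrib[of "Poly_Mapping.single _"] sum.delta' cong: if_cong)
  then show ?thesis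
    unfolding in_span_mod_def
    by (intro exI[of _ "\<lambda>t. if t = s then a else 0"]) (simp add: poly_subspaceD(1)[OF I])
qed

lemma in_span_mod_add:
  assumes "in_span_mod I S p" "in_span_mod I S q"
  shows "in_span_mod I S (p + q)"
proof -
  obtain c d where c: "p - (\<Sum>s\<in>S. Poly_Mapping.single s (c s)) \<in> I"
    and d: "q - (\<Sum>s\<in>S. Poly_Mapping.single s (d s)) \<in> I"
    using assms unfolding in_span_mod_def by blast
  have "(p + q) - (\<Sum>s\<in>S. Poly_Mapping.single s (c s + d s))
      = (p - (\<Sum>s\<in>S. Poly_Mapping.single s (c s))) + (q - (\<Sum>s\<in>S. Poly_Mapping.single s (d s)))"
    by (simp add: single_add sum.distrib)
  with c d have "(p + q) - (\<Sum>s\<in>S. Poly_Mapping.single s (c s + d s)) \<in> I"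
    by (simp only: poly_subspaceD(2)[OF I])
  then show ?thesis
    unfolding in_span_mod_def by (intro exI[of _ "\<lambda>s. c s + d s"])
qed

lemma in_span_mod_single_0_mult:
  assumes "in_span_mod I S p"
  shows "in_span_mod I S (Poly_Mapping.single 0 a * p)"
proof -
  obtain c where c: "p - (\<Sum>s\<in>S. Poly_Mapping.single s (c s)) \<in> I"
    using assms unfolding in_span_mod_def by blast
  have "Poly_Mapping.single 0 a * p - (\<Sum>s\<in>S. Poly_Mapping.single s (a * c s))
      = Poly_Mapping.single 0 a * (p - (\<Sum>s\<in>S. Poly_Mapping.single s (c s)))"
    by (simp add: right_diff_distrib sum_distrib_left mult_single)
  with c have "Poly_Mapping.single 0 a * p - (\<Sum>s\<in>S. Poly_Mapping.single s (a * c s)) \<in> I"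
    by (simp only: poly_subspaceD(3)[OF I])
  then show ?thesis
    unfolding in_span_mod_def by (intro exI[of _ "\<lambda>s. a * c s"])
qed

lemma in_span_mod_diff:
  assumes "in_span_mod I S p" "in_span_mod I S q"
  shows "in_span_mod I S (p - q)"
proof -
  have "p - q = p + Poly_Mapping.single 0 (- 1) * q"
    by (simp add: single_uminus)
  then show ?thesis
    using assms by (metis in_span_mod_add in_span_mod_single_0_mult)
qed

lemma in_span_mod_sum:
  assumes "\<And>k. k \<in> K \<Longrightarrow> in_span_mod I S (f k)"
  shows "in_span_mod I S (\<Sum>k\<in>K. f k)"
  using assms
  by (induction K rule: infinite_finite_induct)
    (simp_all add: in_span_mod_mem poly_subspaceD(1)[OF I] in_span_mod_add)

end

lemma lex_less_irrefl: "\<not> lex_less m m"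
  by (auto simp: lex_less_def)

lemma lex_less_trans:
  assumes "lex_less a b" "lex_less b c"
  shows "lex_less a c"
proof -
  obtain k1 where k1: "Poly_Mapping.lookup a k1 < Poly_Mapping.lookup b k1"
    "\<forall>i<k1. Poly_Mapping.lookup a i = Poly_Mapping.lookup b i"
    using assms(1) by (auto simp: lex_less_def)
  obtain k2 where k2: "Poly_Mapping.lookup b k2 < Poly_Mapping.lookup c k2"
    "\<forall>i<k2. Poly_Mapping.lookup b i = Poly_Mapping.lookup c i"
    using assms(2) by (auto simp: lex_less_def)
  have "Poly_Mapping.lookup a (min k1 k2) < Poly_Mapping.lookup c (min k1 k2)"
    using k1 k2 by (cases k1 k2 rule: linorder_cases) auto
  moreover have "\<forall>i<min k1 k2. Poly_Mapping.lookup a i = Poly_Mapping.lookup c i"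
    using k1(2) k2(2) by simp
  ultimately show ?thesis
    unfolding lex_less_def by blast
qed

lemma lex_less_chain:
  assumes step: "\<And>i. l \<le> i \<Longrightarrow> i < h \<Longrightarrow> lex_less (f i) (f (Suc i))"
    and "l \<le> i"
  shows "i < k \<Longrightarrow> k \<le> h \<Longrightarrow> lex_less (f i) (f k)"
proof (induction k)
  case 0
  then show ?case by simp
next
  case (Suc k)
  then show ?case
    using step[of k] \<open>l \<le> i\<close> lex_less_trans by (cases "i = k") auto
qed

text \<open>Finiteness of \<open>V\<close> matters: in infinitely many variables
  \<open>X\<^sub>2 > X\<^sub>3 > X\<^sub>4 > \<dots>\<close> descends forever.\<close>

lemma wf_lex_less_mons_on:
  assumes "finite V"
  shows "wf {(x, y). x \<in> mons_on V \<and> y \<in> mons_on V \<and> lex_less x y}"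
proof -
  obtain N where N: "V \<subseteq> {..<N}"
    using assms finite_nat_set_iff_bounded by auto
  define exps where "exps m = map (Poly_Mapping.lookup m) [0..<N]" for m :: "nat \<Rightarrow>\<^sub>0 nat"
  have "(exps x, exps y) \<in> lex less_than"
    if y: "y \<in> mons_on V" and less: "lex_less x y" for x y
  proof -
    obtain k where k: "Poly_Mapping.lookup x k < Poly_Mapping.lookup y k"
      "\<forall>i<k. Poly_Mapping.lookup x i = Poly_Mapping.lookup y i"
      using less by (auto simp: lex_less_def)
    have "k \<in> Poly_Mapping.keys y"
      using k(1) by (simp add: in_keys_iff)
    then have "k < N"
      using y N by (auto simp: mons_on_def)
    then have split: "[0..<N] = [0..<k] @ k # [Suc k..<N]"
      by (metis upt_add_eq_append[of 0 k "N - k"] upt_conv_Cons le0 le_add_diff_inverse less_imp_le)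
    have "map (Poly_Mapping.lookup x) [0..<k] = map (Poly_Mapping.lookup y) [0..<k]"
      using k(2) by simp
    then show ?thesis
      unfolding exps_def split lex_conv using k(1)
      by (auto intro!: exI[of _ "map (Poly_Mapping.lookup x) [0..<k]"])
  qed
  then have "{(x, y). x \<in> mons_on V \<and> y \<in> mons_on V \<and> lex_less x y}
      \<subseteq> inv_image (lex less_than) exps"
    by auto
  then show ?thesis
    by (rule wf_subset[rotated]) (intro wf_inv_image wf_lex wf_less_than)
qed

lemma in_span_mod_key:
  fixes I :: "((nat \<Rightarrow>\<^sub>0 nat) \<Rightarrow>\<^sub>0 'a::field) set"
  assumes I: "poly_subspace I" and "f \<in> I" and m: "m \<in> Poly_Mapping.keys f"
    and others: "\<And>k. k \<in> Poly_Mapping.keys f \<Longrightarrow> k \<noteq> m \<Longrightarrow> in_span_mod I S (Poly_Mapping.single k 1)"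
  shows "in_span_mod I S (Poly_Mapping.single m 1)"
proof -
  define a where "a = Poly_Mapping.lookup f m"
  define K where "K = Poly_Mapping.keys f - {m}"
  have "a \<noteq> 0"
    using m by (simp add: a_def in_keys_iff)
  have lower: "in_span_mod I S (Poly_Mapping.single k (Poly_Mapping.lookup f k))" if "k \<in> K" for k
  proof -
    have "in_span_mod I S (Poly_Mapping.single 0 (Poly_Mapping.lookup f k) * Poly_Mapping.single k 1)"
      using others that unfolding K_def by (blast intro: in_span_mod_single_0_mult[OF I])
    then show ?thesis
      by (simp add: mult_single)
  qed
  have "f = Poly_Mapping.single m a + (\<Sum>k\<in>K. Poly_Mapping.single k (Poly_Mapping.lookup f k))"
    unfolding a_def K_def using m
    by (subst poly_mapping_sum_single_keys) (simp add: sum.remove)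
  then have "Poly_Mapping.single m a = f - (\<Sum>k\<in>K. Poly_Mapping.single k (Poly_Mapping.lookup f k))"
    by (simp add: eq_diff_eq)
  then have "in_span_mod I S (Poly_Mapping.single m a)"
    using \<open>f \<in> I\<close> lower
    by (simp add: in_span_mod_diff[OF I] in_span_mod_mem[OF I] in_span_mod_sum[OF I])
  then have "in_span_mod I S (Poly_Mapping.single 0 (1 / a) * Poly_Mapping.single m a)"
    by (rule in_span_mod_single_0_mult[OF I])
  then show ?thesis
    using \<open>a \<noteq> 0\<close> by (simp add: mult_single)
qed

lemma in_span_mod_standard_below:
  fixes I :: "((nat \<Rightarrow>\<^sub>0 nat) \<Rightarrow>\<^sub>0 'a::field) set"
  assumes I: "poly_subspace I" and IV: "I \<subseteq> polys_on V" and V: "finite V" and S: "finite S"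
    and std: "\<And>m. lex_standard V I m \<Longrightarrow> lex_less m tp \<Longrightarrow> m \<in> S"
  shows "m \<in> mons_on V \<Longrightarrow> lex_less m tp \<Longrightarrow> in_span_mod I S (Poly_Mapping.single m 1)"
proof (induction m rule: wf_induct_rule[OF wf_lex_less_mons_on[OF V]])
  case (1 m)
  show ?case
  proof (cases "lex_standard V I m")
    case True
    then show ?thesis
      using std 1 S by (simp add: in_span_mod_single[OF I])
  next
    case False
    then obtain f where "f \<in> I" and lm: "lex_lm f m"
      using 1 by (auto simp: lex_standard_def)
    have others: "in_span_mod I S (Poly_Mapping.single k 1)"
      if "k \<in> Poly_Mapping.keys f" "k \<noteq> m" for k
    proof -
      have "lex_less k m"
        using lm that by (auto simp: lex_lm_def)
      moreover have "k \<in> mons_on V"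
        using IV \<open>f \<in> I\<close> that by (auto simp: polys_on_def)
      ultimately show ?thesis
        using 1 lex_less_trans by blast
    qed
    from lm have "m \<in> Poly_Mapping.keys f"
      by (simp add: lex_lm_def)
    then show ?thesis
      using others by (rule in_span_mod_key[OF I \<open>f \<in> I\<close>])
  qed
qed

lemma dependent_mod_insert:
  assumes "finite S" "b \<notin> S" "in_span_mod I S (Poly_Mapping.single b 1)"
  shows "dependent_mod I (insert b S)"
proof -
  obtain c where c: "Poly_Mapping.single b 1 - (\<Sum>s\<in>S. Poly_Mapping.single s (c s)) \<in> I"
    using assms(3) unfolding in_span_mod_def by blast
  define c' where "c' s = (if s = b then 1 else - c s)" for s
  have "(\<Sum>s\<in>S. Poly_Mapping.single s (c' s)) = (\<Sum>s\<in>S. - Poly_Mapping.single s (c s))"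
    using assms(2) by (intro sum.cong) (auto simp: c'_def single_uminus)
  then have "(\<Sum>s\<in>S. Poly_Mapping.single s (c' s)) = - (\<Sum>s\<in>S. Poly_Mapping.single s (c s))"
    by (simp add: sum_negf)
  then have "(\<Sum>s\<in>insert b S. Poly_Mapping.single s (c' s)) \<in> I"
    using c assms(1,2) by (simp add: c'_def)
  moreover have "c' b \<noteq> 0"
    by (simp add: c'_def)
  ultimately show ?thesis
    unfolding dependent_mod_def by (intro exI[of _ c'] conjI bexI[of _ b]) simp_all
qed

theorem lemma5:
  fixes U :: "nat \<Rightarrow> (nat \<Rightarrow>\<^sub>0 nat) \<Rightarrow> 'a::field"
    and n t j u :: nat
    and bs :: "nat \<Rightarrow> (nat \<Rightarrow>\<^sub>0 nat)"
    and b :: "nat \<Rightarrow>\<^sub>0 nat"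
  assumes perfect: "perfect_field TYPE('a)"
    and zd: "zero_dim_on {0..<n} (ann_on {0..<n} {1..t} U)"
    and j: "j < n"
    and u: "u \<ge> 1"
    and std: "\<forall>i\<in>{1..u+1}. lex_standard {j..<n} (ann_on {j..<n} {1..t} U) (bs i)"
    and incr: "\<forall>i\<in>{1..u}. lex_less (bs i) (bs (i+1))"
    and first: "\<forall>m. lex_standard {j..<n} (ann_on {j..<n} {1..t} U) m \<and> lex_less m (bs (u+1))
                  \<longrightarrow> m \<in> bs ` {1..u}"
    and b1: "bs 1 = 0"
    and bmon: "b \<in> mons_on {j..<n}"
    and blow: "lex_less (bs u) b"
    and bhigh: "lex_less b (bs (u+1))"
  shows "dependent_mod (ann_on {j..<n} {1..t} U) (insert b (bs ` {1..u}))"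
proof (rule dependent_mod_insert)
  have sub: "ann_on {j..<n} {1..t} U \<subseteq> polys_on {j..<n}"
    by (auto simp: ann_on_def)
  have below: "\<And>m. lex_standard {j..<n} (ann_on {j..<n} {1..t} U) m \<Longrightarrow> lex_less m (bs (u+1))
      \<Longrightarrow> m \<in> bs ` {1..u}"
    using first by blast
  show "in_span_mod (ann_on {j..<n} {1..t} U) (bs ` {1..u}) (Poly_Mapping.single b 1)"
    by (rule in_span_mod_standard_below[OF poly_subspace_ann_on sub _ _ below bmon bhigh]) simp_all
  have "lex_less (bs i) b" if i: "i \<in> {1..u}" for i
  proof (cases "i = u")
    case False
    have "\<And>k. 1 \<le> k \<Longrightarrow> k < u \<Longrightarrow> lex_less (bs k) (bs (Suc k))"
      using incr by auto
    with i False have "lex_less (bs i) (bs u)"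
      using lex_less_chain[of 1 u bs i u] by simp
    then show ?thesis
      using blow lex_less_trans by blast
  qed (use blow in simp)
  then show "b \<notin> bs ` {1..u}"
    using lex_less_irrefl by blast
qed simp

end
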